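(* Let $n\ge 3$, let $r_1,\ldots,r_n$ be indeterminates over $\mathbb{Q}$, and let $f=\prod_{i=1}^n(x-r_i)=x^n+a_{n-1}x^{n-1}+\cdots+a_0$. Let \[f_1(x,y)=\frac{f(y)-f(x)}{y-x},\qquad f_3(x,y)=\frac{f(y)-2f\left(\frac{x+y}{2}\right)+f(x)}{\frac{(y-x)^2}{2}},\] and $F(x)=\operatorname{res}(f_1,f_3,y)$. Then for any $k,j\in\{2,\ldots,n\}$ with $k\ne j$, the polynomial $r_1-2r_k+r_j$ divides $F(r_1)$ in $\mathbb{Q}[r_1,\ldots,r_n]$.
   Context: $\operatorname{res}(\cdot,\cdot,y)$ is the Sylvester resultant with respect to $y$; $F(r_1)$ is $F$ with $x$ replaced by $r_1$, viewed as a polynomial in $r_1,\ldots,r_n$. *)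

theory Defs
  imports "HOL-Library.Poly_Mapping" "Subresultants.Resultant_Prelim"
begin

text \<open>Multivariate polynomials over the rationals in the indeterminates r_i (i :: nat):
  a polynomial is a finitely supported map from monomials (exponent vectors
  finitely supported nat-valued maps) to rational coefficients.\<close>
type_synonym mpoly = "(nat \<Rightarrow>\<^sub>0 nat) \<Rightarrow>\<^sub>0 rat"

definition mVar :: "nat \<Rightarrow> mpoly" where
  "mVar i = Poly_Mapping.single (Poly_Mapping.single i 1) 1"

definition mConst :: "rat \<Rightarrow> mpoly" where
  "mConst c = Poly_Mapping.single 0 c"

definition fpoly :: "nat \<Rightarrow> mpoly poly" where
  "fpoly n = (\<Prod>i = 1..n. [: - mVar i, 1 :])"

text \<open>Bivariate polynomials in x,y over Q[r]: type mpoly poly poly,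
  outer variable y, inner variable x.\<close>
definition bX :: "mpoly poly poly" where "bX = [: [: 0, 1 :] :]"
definition bY :: "mpoly poly poly" where "bY = [: 0, 1 :]"

definition bConst :: "rat \<Rightarrow> mpoly poly poly" where
  "bConst c = [: [: mConst c :] :]"

definition bsubst :: "mpoly poly \<Rightarrow> mpoly poly poly \<Rightarrow> mpoly poly poly" where
  "bsubst g P = poly (map_poly (\<lambda>c. [: [: c :] :]) g) P"

definition f1 :: "nat \<Rightarrow> mpoly poly poly" where
  "f1 n = (THE q. (bY - bX) * q = bsubst (fpoly n) bY - bsubst (fpoly n) bX)"

definition f3 :: "nat \<Rightarrow> mpoly poly poly" where
  "f3 n = (THE q. (bConst (1/2) * (bY - bX)^2) * q =
      bsubst (fpoly n) bY - 2 * bsubst (fpoly n) (bConst (1/2) * (bX + bY)) + bsubst (fpoly n) bX)"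

definition Fres :: "nat \<Rightarrow> mpoly poly" where
  "Fres n = resultant (f1 n) (f3 n)"

end

theory Submission
  imports Defs "Subresultants.Subresultant"
begin

text \<open>Specialise x := r_1 and y := r_j. Since f(r_1) = f(r_j) = 0, f_1 vanishes there, while
  f_3 becomes -2 f((r_1 + r_j)/2) / ((r_j - r_1)^2/2); the factor (r_1 + r_j)/2 - r_k of f at the
  midpoint is half of r_1 - 2 r_k + r_j. The resultant lies in the ideal generated by f_1 and f_3,
  so its specialisation, which is F(r_1), is divisible by r_1 - 2 r_k + r_j.\<close>

lemma resultant_as_combination:
  fixes f g :: "'a :: comm_ring_1 poly"
  assumes deg: "degree f + degree g > 0"
  obtains p q where "[: resultant f g :] = p * f + q * g"
proof -
  define N where "N = degree f + degree g"
  define S where "S = subresultant_mat 0 f g"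
  define P where "P j = (if j < degree g
      then monom 1 (degree g - 1 - j) * cofactor S (N - 1) j else 0)" for j
  define Q where "Q j = (if j < degree g then 0
      else monom 1 (degree f - 1 - (j - degree g)) * cofactor S (N - 1) j)" for j
  have S: "S \<in> carrier_mat N N" unfolding S_def N_def by (rule carrier_matI) simp_all
  have last: "N - 1 < N" using deg N_def by simp
  have entry: "S $$ (N - 1, j) = (if j < degree g then monom 1 (degree g - 1 - j) * f
      else monom 1 (degree f - 1 - (j - degree g)) * g)" if "j < N" for j
    using subresultant_index_mat[of "N - 1" f 0 g j] that last
    unfolding S_def N_def by (simp add: Let_def)
  have row: "S $$ (N - 1, j) * cofactor S (N - 1) j = P j * f + Q j * g" if "j < N" for j
    using entry[OF that] unfolding P_def Q_def by (simp add: ac_simps)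
  have "[: resultant f g :] = det S"
    unfolding S_def subresultant_resultant[symmetric] subresultant_def ..
  also have "\<dots> = (\<Sum>j<N. S $$ (N - 1, j) * cofactor S (N - 1) j)"
    by (rule laplace_expansion_row[OF S last])
  also have "\<dots> = (\<Sum>j<N. P j) * f + (\<Sum>j<N. Q j) * g"
    unfolding sum_distrib_right sum.distrib[symmetric] by (intro sum.cong refl row) simp
  finally show ?thesis by (rule that)
qed

lemma diff_dvd_poly_diff:
  fixes p :: "'a :: comm_ring_1 poly"
  shows "(u - v) dvd (poly p u - poly p v)"
proof (induction p)
  case (pCons c p)
  then obtain q where q: "poly p u - poly p v = (u - v) * q" by (elim dvdE)
  have "poly (pCons c p) u - poly (pCons c p) v = (u - v) * poly p u + v * (poly p u - poly p v)"
    by (simp add: algebra_simps)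
  also have "\<dots> = (u - v) * (poly p u + v * q)" unfolding q by (simp add: algebra_simps)
  finally show ?case by simp
qed simp

lemma square_dvd_poly_second_diff:
  fixes p :: "'a :: comm_ring_1 poly"
  shows "d^2 dvd (poly p (m + d) + poly p (m - d) - 2 * poly p m)"
proof (induction p)
  case (pCons c p)
  then obtain q where q: "poly p (m + d) + poly p (m - d) - 2 * poly p m = d^2 * q"
    by (elim dvdE)
  obtain r where r: "poly p (m + d) - poly p (m - d) = ((m + d) - (m - d)) * r"
    using diff_dvd_poly_diff[of "m + d" "m - d" p] by (elim dvdE)
  have "poly (pCons c p) (m + d) + poly (pCons c p) (m - d) - 2 * poly (pCons c p) m
      = m * (poly p (m + d) + poly p (m - d) - 2 * poly p m) + d * (poly p (m + d) - poly p (m - d))"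
    by (simp add: algebra_simps)
  also have "\<dots> = d^2 * (m * q + 2 * r)" unfolding q r by (simp add: algebra_simps power2_eq_square)
  finally show ?case by simp
qed simp

lemma mult_The_quotient:
  fixes c r :: "'a :: idom"
  assumes "c \<noteq> 0" and "c dvd r"
  shows "c * (THE q. c * q = r) = r"
proof (rule theI')
  from assms(2) obtain q where "r = c * q" by (elim dvdE)
  with assms(1) show "\<exists>!q. c * q = r" by auto
qed

lemma midpoint_product:
  fixes a b c h :: "'a :: comm_ring_1"
  assumes "2 * h = 1"
  shows "(h * (a + b) - a) * (h * (a + b) - b) * (h * (a + b) - c)
    = - (h^3 * (b - a)^2 * (a - 2 * c + b))"
proof -
  have "h * (a + b) - a = h * (b - a) + (2 * h - 1) * a"
    and "h * (a + b) - b = - (h * (b - a)) + (2 * h - 1) * b"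
    and "h * (a + b) - c = h * (a - 2 * c + b) + (2 * h - 1) * c"
    by (simp_all add: algebra_simps)
  then show ?thesis using assms by (simp add: algebra_simps power2_eq_square power3_eq_cube)
qed

lemma two_mult_mConst_half: "2 * mConst (1/2) = 1"
proof -
  have "2 * mConst (1/2) = mConst (1/2 + 1/2)"
    unfolding mConst_def mult_2 single_add ..
  also have "\<dots> = 1" unfolding mConst_def by (simp add: single_one)
  finally show ?thesis .
qed

lemma two_mult_bConst_half: "2 * bConst (1/2) = 1"
  unfolding bConst_def mult_2 by (simp add: two_mult_mConst_half[unfolded mult_2] flip: one_pCons)

lemma mVar_eq_iff: "mVar i = mVar l \<longleftrightarrow> i = l"
  unfolding mVar_def by (metis lookup_single_eq lookup_single_not_eq one_neq_zero)

lemma poly_fpoly_mVar: "i \<in> {1..n} \<Longrightarrow> poly (fpoly n) (mVar i) = 0"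
  unfolding fpoly_def poly_prod by (rule prod_zero) auto

lemma poly_fpoly_three_factors:
  assumes "i \<in> {1..n}" "j \<in> {1..n}" "k \<in> {1..n}" and "i \<noteq> j" "i \<noteq> k" "j \<noteq> k"
  obtains R where "poly (fpoly n) x = (x - mVar i) * (x - mVar j) * (x - mVar k) * R"
proof -
  have "poly (fpoly n) x = (\<Prod>l\<in>{1..n}. x - mVar l)"
    unfolding fpoly_def poly_prod by simp
  also have "\<dots> = (\<Prod>l\<in>{1..n} - {i, j, k}. x - mVar l) * (\<Prod>l\<in>{i, j, k}. x - mVar l)"
    by (rule prod.subset_diff) (use assms in auto)
  also have "\<dots> = (\<Prod>l\<in>{i, j, k}. x - mVar l) * (\<Prod>l\<in>{1..n} - {i, j, k}. x - mVar l)"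
    by (rule mult.commute)
  also have "(\<Prod>l\<in>{i, j, k}. x - mVar l) = (x - mVar i) * (x - mVar j) * (x - mVar k)"
    using assms by (simp add: ac_simps)
  finally show ?thesis by (rule that)
qed

lemma bsubst_pcompose: "bsubst g P = map_poly (\<lambda>c. [:c:]) g \<circ>\<^sub>p P"
  unfolding bsubst_def pcompose_altdef by (simp add: map_poly_map_poly o_def)

definition eval_xy :: "mpoly \<Rightarrow> mpoly \<Rightarrow> mpoly poly poly \<Rightarrow> mpoly" where
  "eval_xy a b P = poly (poly P [:b:]) a"

lemma comm_ring_hom_eval_xy: "comm_ring_hom (eval_xy a b)"
  by unfold_locales (simp_all add: eval_xy_def)

lemma eval_xy_bX [simp]: "eval_xy a b bX = a"
  and eval_xy_bY [simp]: "eval_xy a b bY = b"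
  and eval_xy_bConst [simp]: "eval_xy a b (bConst c) = mConst c"
  by (simp_all add: eval_xy_def bX_def bY_def bConst_def)

lemma eval_xy_bsubst [simp]: "eval_xy a b (bsubst g P) = poly g (eval_xy a b P)"
  by (simp add: eval_xy_def bsubst_pcompose poly_pcompose flip: pcompose_altdef)

lemma bY_minus_bX_neq_0: "bY - bX \<noteq> 0"
proof -
  have "coeff (bY - bX) 1 = 1" by (simp add: bY_def bX_def)
  then show ?thesis by auto
qed

lemma f1_characterization: "(bY - bX) * f1 n = bsubst (fpoly n) bY - bsubst (fpoly n) bX"
  unfolding f1_def bsubst_def by (intro mult_The_quotient bY_minus_bX_neq_0 diff_dvd_poly_diff)

lemma f3_characterization:
  "(bConst (1/2) * (bY - bX)^2) * f3 n =
      bsubst (fpoly n) bY - 2 * bsubst (fpoly n) (bConst (1/2) * (bX + bY)) + bsubst (fpoly n) bX"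
  unfolding f3_def
proof (rule mult_The_quotient)
  define h where "h = bConst (1/2)"
  define G where "G = map_poly (\<lambda>c. [:[:c:]:]) (fpoly n)"
  define m where "m = h * (bX + bY)"
  define d where "d = h * (bY - bX)"
  have h: "2 * h = 1" unfolding h_def by (rule two_mult_bConst_half)
  then show "bConst (1/2) * (bY - bX)^2 \<noteq> 0" using bY_minus_bX_neq_0 unfolding h_def by auto
  have md: "m + d = bY" "m - d = bX"
  proof -
    have "m + d = (2 * h) * bY" "m - d = (2 * h) * bX"
      unfolding m_def d_def by (simp_all add: algebra_simps)
    then show "m + d = bY" "m - d = bX" unfolding h by simp_all
  qed
  have "bsubst (fpoly n) bY - 2 * bsubst (fpoly n) (bConst (1/2) * (bX + bY)) + bsubst (fpoly n) bX
      = poly G (m + d) + poly G (m - d) - 2 * poly G m"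
    unfolding md by (simp add: bsubst_def G_def m_def h_def)
  also have "d^2 dvd \<dots>" by (rule square_dvd_poly_second_diff)
  then obtain q where "\<dots> = d^2 * q" by (elim dvdE)
  also have "d^2 * q = (bConst (1/2) * (bY - bX)^2) * (h * q)"
    unfolding d_def h_def by (simp add: power2_eq_square algebra_simps)
  finally show "bConst (1/2) * (bY - bX)^2 dvd
      bsubst (fpoly n) bY - 2 * bsubst (fpoly n) (bConst (1/2) * (bX + bY)) + bsubst (fpoly n) bX"
    by simp
qed

lemma degree_fpoly: "degree (fpoly n) = n"
  unfolding fpoly_def by (subst degree_prod_eq_sum_degree) auto

lemma degree_f1: "n \<ge> 1 \<Longrightarrow> degree (f1 n) = n - 1"
proof -
  assume "n \<ge> 1"
  define G where "G = map_poly (\<lambda>c. [:c:]) (fpoly n)"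
  have "degree G = n" unfolding G_def by (simp add: degree_map_poly degree_fpoly)
  moreover have "bsubst (fpoly n) bY = G" and "bsubst (fpoly n) bX = [:poly G [:0, 1:]:]"
    unfolding bsubst_pcompose G_def bY_def bX_def by (simp_all only: pcompose_idR pcompose_pCons_0)
  then have "(bY - bX) * f1 n = G + [:- poly G [:0, 1:]:]"
    unfolding f1_characterization by simp
  ultimately have "degree ((bY - bX) * f1 n) = n"
    using \<open>n \<ge> 1\<close> by (simp add: degree_add_eq_left)
  moreover have "degree (bY - bX) = 1" by (simp add: bY_def bX_def)
  ultimately show ?thesis
    using \<open>n \<ge> 1\<close> bY_minus_bX_neq_0 by (cases "f1 n = 0") (auto simp: degree_mult_eq)
qed

lemma eval_xy_f1:
  assumes "i \<in> {1..n}" "j \<in> {1..n}" and "i \<noteq> j"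
  shows "eval_xy (mVar i) (mVar j) (f1 n) = 0"
proof -
  interpret comm_ring_hom "eval_xy (mVar i) (mVar j)" by (rule comm_ring_hom_eval_xy)
  have "(mVar j - mVar i) * eval_xy (mVar i) (mVar j) (f1 n) = 0"
    using arg_cong[OF f1_characterization, of "eval_xy (mVar i) (mVar j)"] assms
    by (simp add: hom_distribs poly_fpoly_mVar)
  then show ?thesis using assms by (simp add: mVar_eq_iff)
qed

lemma eval_xy_f3_dvd:
  assumes "i \<in> {1..n}" "j \<in> {1..n}" "k \<in> {1..n}" and "i \<noteq> j" "i \<noteq> k" "j \<noteq> k"
  shows "(mVar i - 2 * mVar k + mVar j) dvd eval_xy (mVar i) (mVar j) (f3 n)"
proof -
  interpret comm_ring_hom "eval_xy (mVar i) (mVar j)" by (rule comm_ring_hom_eval_xy)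
  define a b c h where "a = mVar i" and "b = mVar j" and "c = mVar k" and "h = mConst (1/2)"
  define m where "m = h * (a + b)"
  have h: "2 * h = 1" unfolding h_def by (rule two_mult_mConst_half)
  then have "h \<noteq> 0" by auto
  obtain R where R: "poly (fpoly n) m = (m - a) * (m - b) * (m - c) * R"
    unfolding a_def b_def c_def using poly_fpoly_three_factors[OF assms] .
  have "(h * (b - a)^2) * eval_xy a b (f3 n) = - 2 * poly (fpoly n) m"
    using arg_cong[OF f3_characterization, of "eval_xy a b"] assms
    by (simp add: hom_distribs poly_fpoly_mVar a_def b_def m_def h_def add.commute)
  also have "\<dots> = (h * (b - a)^2) * ((a - 2 * c + b) * (2 * h * h * R))"
    unfolding R unfolding m_def midpoint_product[OF h] by (simp add: algebra_simps power3_eq_cube)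
  finally have "eval_xy a b (f3 n) = (a - 2 * c + b) * (2 * h * h * R)"
    using \<open>h \<noteq> 0\<close> assms by (simp add: a_def b_def mVar_eq_iff)
  then show ?thesis unfolding a_def b_def c_def by simp
qed

theorem lemma4:
  fixes n k j :: nat
  assumes "n \<ge> 3"
    and "k \<in> {2..n}" and "j \<in> {2..n}" and "k \<noteq> j"
  shows "(mVar 1 - 2 * mVar k + mVar j) dvd poly (Fres n) (mVar 1)"
proof -
  interpret comm_ring_hom "eval_xy (mVar 1) (mVar j)" by (rule comm_ring_hom_eval_xy)
  have "degree (f1 n) + degree (f3 n) > 0" using degree_f1[of n] assms(1) by simp
  then obtain p q where res: "[: resultant (f1 n) (f3 n) :] = p * f1 n + q * f3 n"
    by (rule resultant_as_combination)
  have "poly (Fres n) (mVar 1) = eval_xy (mVar 1) (mVar j) [: resultant (f1 n) (f3 n) :]"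
    unfolding Fres_def eval_xy_def by simp
  also have "\<dots> = eval_xy (mVar 1) (mVar j) p * eval_xy (mVar 1) (mVar j) (f1 n)
      + eval_xy (mVar 1) (mVar j) q * eval_xy (mVar 1) (mVar j) (f3 n)"
    unfolding res hom_add hom_mult ..
  finally show ?thesis
    using assms eval_xy_f1[of 1 n j] eval_xy_f3_dvd[of 1 n j k] by simp
qed

end
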